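(* Consider problem (P) under Assumptions (A1)–(A3), suppose $\inf_{x\in\mathcal{X}}f(x)>-\infty$, and suppose the SMIL algorithm generates an infinite sequence of (accepted) iterates. Then: (i) $\{f(x^k)\}$ and $\{m_k\}$ converge to the same finite value $f_\star\ge\inf_{\mathcal{X}}f$, the latter from above; (ii) $\sum_{k\in\mathbb{N}}\Psi_k<\infty$; (iii) $\lim_{k\to\infty}\Psi_k=0$.
   Context: Problem (P): minimize $f(x)$ subject to $x\in\mathcal{X}:=\bar{\mathcal{X}}\cap\{x\in\mathbb{R}^n : x_i\in\mathbb{Z}\ \forall i\in\mathcal{I}\}$, with $\bar{\mathcal{X}}\subseteq\mathbb{R}^n$ a closed convex polyhedral set, $\mathcal{I}\subseteq\{1,\dots,n\}$, $\mathcal{X}\ne\emptyset$, $f:\mathbb{R}^n\to\mathbb{R}$. Write $x=(u,z)$ with $u$ the components with indices not in $\mathcal{I}$ and $z$ those in $\mathcal{I}$. Assumptions: (A1) $f$ is $C^1$ with locally Lipschitz gradient; (A2) $f(u,z)=f_1(u)+\langle f_2,z\rangle$; (A3) the feasible integer parts $\{z:(u,z)\in\mathcal{X}\}$ form a bounded set. $\|x\|_{PL}$ is the $\ell_1$- or $\ell_\infty$-norm of the components with indices not in $\mathcal{I}$; $\mathbb{B}_{PL}(x,\Delta):=\{w:\|w-x\|_{PL}\le\Delta\}$. SMIL algorithm. Input $x^0\in\mathcal{X}$, $\varepsilon\ge0$; parameters $\Delta_0>0$, $\varrho,\kappa\in(0,1)$, $\kappa_m\in(0,1]$. Set $m_0:=f(x^0)$.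 For $k=0,1,2,\dots$: (S1) compute $x^{k+1}\in\arg\min\{\langle\nabla f(x^k),x\rangle : x\in\mathcal{X}\cap\mathbb{B}_{PL}(x^k,\Delta_k)\}$; (S2) set $a_k:=m_k-f(x^{k+1})$ and $\Psi_k:=\langle\nabla f(x^k),x^k-x^{k+1}\rangle$; (S3) if $\Psi_k\le\varepsilon$, return $x^k$; (S4) if $a_k<\varrho\Psi_k$, set $\Delta_k\leftarrow\kappa\Delta_k$ and go back to (S1); (S5) set $m_{k+1}:=(1-\kappa_m)m_k+\kappa_m f(x^{k+1})$; (S6) choose $\Delta_{k+1}$ either by the rule $\Delta_{k+1}=\kappa\Delta_k$ if $\rho_k<\varrho_1$, $=\Delta_k$ if $\varrho_1\le\rho_k<\varrho_2$, $=\Delta_k/\kappa$ if $\rho_k\ge\varrho_2$, where $\rho_k:=a_k/\Psi_k$ and $\varrho\le\varrho_1<\varrho_2<1$; or by a reset $\Delta_{k+1}\in[\Delta_{\min},\Delta_{\max}]$, $0<\Delta_{\min}\le\Delta_{\max}$. Here $\Psi_k$, $m_k$, $x^{k+1}$ refer to the accepted values at iteration $k$. *)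

theory Defs
  imports "HOL-Analysis.Analysis"
begin

definition mi_feasible :: "(real^'n) set \<Rightarrow> 'n set \<Rightarrow> (real^'n) set" where
  "mi_feasible Xbar I = Xbar \<inter> {x. \<forall>i\<in>I. x $ i \<in> \<int>}"

definition cont_part :: "'n set \<Rightarrow> real^'n \<Rightarrow> real^'n" where
  "cont_part I x = (\<chi> i. if i \<in> I then 0 else x $ i)"

definition int_part :: "'n set \<Rightarrow> real^'n \<Rightarrow> real^'n" where
  "int_part I x = (\<chi> i. if i \<in> I then x $ i else 0)"

definition pl_norm1 :: "'n::finite set \<Rightarrow> real^'n \<Rightarrow> real" where
  "pl_norm1 I x = (\<Sum>i\<in>UNIV - I. \<bar>x $ i\<bar>)"

definition pl_norminf :: "'n::finite set \<Rightarrow> real^'n \<Rightarrow> real" where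
  "pl_norminf I x = Max (insert 0 ((\<lambda>i. \<bar>x $ i\<bar>) ` (UNIV - I)))"

definition pl_ball :: "(real^'n \<Rightarrow> real) \<Rightarrow> real^'n \<Rightarrow> real \<Rightarrow> (real^'n) set" where
  "pl_ball nrm x \<Delta> = {w. nrm (w - x) \<le> \<Delta>}"

definition smil_step :: "(real^'n) set \<Rightarrow> (real^'n \<Rightarrow> real) \<Rightarrow> real^'n \<Rightarrow> real^'n \<Rightarrow> real \<Rightarrow> real^'n \<Rightarrow> bool" where
  "smil_step X nrm g x \<Delta> y \<longleftrightarrow>
     y \<in> X \<inter> pl_ball nrm x \<Delta> \<and> (\<forall>w \<in> X \<inter> pl_ball nrm x \<Delta>. g \<bullet> y \<le> g \<bullet> w)"

end

theory Submission
  imports Defs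
begin

text \<open>The merit values m_k decrease by at least kappam * rho * Psi_k per iteration and stay above
  inf f, so they converge and the decreases, hence the Psi_k, are summable. Since m_(k+1) is a
  fixed convex combination of m_k and f(x_(k+1)), the values f(x_k) share the limit of m_k.\<close>

lemma convex_average_lower_bound:
  fixes m a :: "nat \<Rightarrow> real"
  assumes avg: "\<And>k. m (Suc k) = (1 - t) * m k + t * a (Suc k)"
    and t: "0 \<le> t" "t \<le> 1"
    and m0: "L \<le> m 0" and a: "\<And>k. L \<le> a k"
  shows "L \<le> m k"
proof (induction k)
  case 0
  show ?case using m0 .
next
  case (Suc k)
  have "(1 - t) * L \<le> (1 - t) * m k" using Suc t by (intro mult_left_mono) auto
  moreover have "t * L \<le> t * a (Suc k)" using a t by (intro mult_left_mono) auto
  ultimately show ?case using avg[of k] by (simp add: algebra_simps)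
qed

lemma convex_average_limit:
  fixes m a :: "nat \<Rightarrow> real"
  assumes avg: "\<And>k. m (Suc k) = (1 - t) * m k + t * a (Suc k)"
    and t: "t \<noteq> 0" and lim: "m \<longlonglongrightarrow> l"
  shows "a \<longlonglongrightarrow> l"
proof -
  have a_eq: "a (Suc k) = (m (Suc k) - (1 - t) * m k) / t" for k
    using avg[of k] t by (simp add: field_simps)
  have "(\<lambda>k. (m (Suc k) - (1 - t) * m k) / t) \<longlonglongrightarrow> (l - (1 - t) * l) / t"
    by (intro tendsto_intros LIMSEQ_Suc[OF lim] lim t)
  then have "(\<lambda>k. a (Suc k)) \<longlonglongrightarrow> l"
    using t by (simp add: a_eq field_simps)
  then show ?thesis by (rule LIMSEQ_imp_Suc)
qed

lemma sufficient_decrease_convergent_summable: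
  fixes m Psi :: "nat \<Rightarrow> real"
  assumes c: "c > 0" and Psi: "\<And>k. 0 \<le> Psi k"
    and decrease: "\<And>k. c * Psi k \<le> m k - m (Suc k)"
    and bounded: "\<And>k. L \<le> m k"
  shows "\<exists>l. m \<longlonglongrightarrow> l \<and> (\<forall>k. l \<le> m k) \<and> summable Psi"
proof -
  have "decseq m"
  proof (rule decseq_SucI)
    fix k
    have "0 \<le> c * Psi k" using c Psi[of k] by simp
    then show "m (Suc k) \<le> m k" using decrease[of k] by linarith
  qed
  then obtain l where lim: "m \<longlonglongrightarrow> l" and above: "\<forall>k. l \<le> m k"
    using decseq_convergent[of m L] bounded by blast
  have "summable (\<lambda>k. (m k - m (Suc k)) / c)"
    by (intro summable_divide telescope_summable'[OF lim])
  moreover have "norm (Psi k) \<le> (m k - m (Suc k)) / c" for k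
  proof -
    have "Psi k \<le> (m k - m (Suc k)) / c"
      using decrease[of k] c by (simp add: pos_le_divide_eq mult.commute)
    then show ?thesis using Psi[of k] by simp
  qed
  ultimately have "summable Psi"
    by (rule summable_comparison_test')
  with lim above show ?thesis by blast
qed

theorem mainTheorem6:
  fixes f :: "real^'n \<Rightarrow> real" and f' :: "real^'n \<Rightarrow> real^'n"
    and Xbar :: "(real^'n) set" and I :: "'n set"
    and nrm :: "real^'n \<Rightarrow> real"
    and x :: "nat \<Rightarrow> real^'n" and m :: "nat \<Rightarrow> real"
    and D :: "nat \<Rightarrow> real" and Dacc :: "nat \<Rightarrow> real" and j :: "nat \<Rightarrow> nat"
    and eps Delta0 rho kappa kappam rho1 rho2 Dmin Dmax :: real
  defines "X \<equiv> mi_feasible Xbar I"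
  defines "Psi \<equiv> (\<lambda>k. f' (x k) \<bullet> (x k - x (Suc k)))"
  assumes poly: "polyhedron Xbar"
    and nonempty: "X \<noteq> {}"
    \<comment> \<open>(A1): f is C^1 with gradient f', and f' is locally Lipschitz\<close>
    and A1_grad: "\<And>y. (f has_derivative (\<lambda>h. f' y \<bullet> h)) (at y)"
    and A1_lip: "\<And>y. \<exists>e>0. \<exists>L. \<forall>v\<in>ball y e. \<forall>w\<in>ball y e. norm (f' v - f' w) \<le> L * norm (v - w)"
    \<comment> \<open>(A2): f(u,z) = f_1(u) + <f_2, z>\<close>
    and A2: "\<exists>f1 :: real^'n \<Rightarrow> real. \<exists>f2 :: real^'n. \<forall>y. f y = f1 (cont_part I y) + f2 \<bullet> int_part I y"
    \<comment> \<open>(A3): the feasible integer parts form a bounded set\<close>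
    and A3: "bounded (int_part I ` X)"
    \<comment> \<open>the PL-norm is the l1- or the l-infinity-norm of the continuous components\<close>
    and nrm: "nrm = pl_norm1 I \<or> nrm = pl_norminf I"
    and inf_finite: "bdd_below (f ` X)"
    \<comment> \<open>parameters\<close>
    and eps_nn: "eps \<ge> 0" and D0pos: "Delta0 > 0"
    and rho_bd: "0 < rho" "rho < 1" and kappa_bd: "0 < kappa" "kappa < 1"
    and kappam_bd: "0 < kappam" "kappam \<le> 1"
    and rho12: "rho \<le> rho1" "rho1 < rho2" "rho2 < 1"
    and Dminmax: "0 < Dmin" "Dmin \<le> Dmax"
    \<comment> \<open>initialization\<close>
    and x0: "x 0 \<in> X" and m0: "m 0 = f (x 0)" and D0: "D 0 = Delta0"
    \<comment> \<open>inner loop (S1)-(S4): j k rejected trial radii, then the accepted radius Dacc k\<close>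
    and rejected: "\<And>k i. i < j k \<Longrightarrow> \<exists>y. smil_step X nrm (f' (x k)) (x k) (kappa ^ i * D k) y
                      \<and> f' (x k) \<bullet> (x k - y) > eps
                      \<and> m k - f y < rho * (f' (x k) \<bullet> (x k - y))"
    and accepted_radius: "\<And>k. Dacc k = kappa ^ j k * D k"
    and step: "\<And>k. smil_step X nrm (f' (x k)) (x k) (Dacc k) (x (Suc k))"
    and no_stop: "\<And>k. Psi k > eps"
    and accept: "\<And>k. m k - f (x (Suc k)) \<ge> rho * Psi k"
    \<comment> \<open>(S5)\<close>
    and m_upd: "\<And>k. m (Suc k) = (1 - kappam) * m k + kappam * f (x (Suc k))"
    \<comment> \<open>(S6): radius update rule or reset\<close>
    and D_upd: "\<And>k. (let ratio = (m k - f (x (Suc k))) / Psi k in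
                   D (Suc k) = (if ratio < rho1 then kappa * Dacc k
                                else if ratio < rho2 then Dacc k else Dacc k / kappa))
                 \<or> D (Suc k) \<in> {Dmin..Dmax}"
  shows "(\<exists>fstar. (\<lambda>k. f (x k)) \<longlonglongrightarrow> fstar \<and> m \<longlonglongrightarrow> fstar
            \<and> fstar \<ge> Inf (f ` X) \<and> (\<forall>k. m k \<ge> fstar))
         \<and> summable Psi \<and> Psi \<longlonglongrightarrow> 0"
proof -
  have x_feasible: "x k \<in> X" for k
    using x0 step unfolding smil_step_def by (cases k) auto
  have f_bounded: "Inf (f ` X) \<le> f (x k)" for k
    using x_feasible[of k] inf_finite by (simp add: cInf_lower)
  have Psi_nonneg: "0 \<le> Psi k" for k
    using no_stop[of k] eps_nn by linarith
  have m_decrease: "kappam * rho * Psi k \<le> m k - m (Suc k)" for k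
  proof -
    have "kappam * (rho * Psi k) \<le> kappam * (m k - f (x (Suc k)))"
      using accept[of k] kappam_bd by (intro mult_left_mono) auto
    then show ?thesis using m_upd[of k] by (simp add: algebra_simps)
  qed
  have m_bounded: "Inf (f ` X) \<le> m k" for k
    using convex_average_lower_bound[of m kappam "\<lambda>k. f (x k)"] m_upd kappam_bd m0 f_bounded
    by simp
  have "kappam * rho > 0"
    using kappam_bd rho_bd by simp
  then obtain fstar where m_lim: "m \<longlonglongrightarrow> fstar" and m_above: "\<forall>k. fstar \<le> m k"
    and "summable Psi"
    using sufficient_decrease_convergent_summable Psi_nonneg m_decrease m_bounded by blast
  moreover have "(\<lambda>k. f (x k)) \<longlonglongrightarrow> fstar"
    using convex_average_limit[of m kappam "\<lambda>k. f (x k)"] m_upd kappam_bd m_lim by simp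
  moreover have "Inf (f ` X) \<le> fstar"
    using m_lim m_bounded by (intro LIMSEQ_le_const) auto
  ultimately show ?thesis
    using summable_LIMSEQ_zero by blast
qed

end
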